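(* Let $L,M,N\in\mathbb N$ and $S=\{m/N^{L+M}: m=1,\dots,N^{L+M}-1\}$. Let $\vec B_L$ be a binary digit vector of length $N^L$ and $\vec B_M$ a binary digit vector of length $N^M$. Then $F_{\vec B_L}(x)=F_{\vec B_M}(x)$ for all $x\in S$ if and only if $F_{\vec B_L}=F_{\vec B_M}$.
   Context: A binary digit vector of length (scale factor) $K\ge3$ is $\vec B=(b_0,\dots,b_{K-1})\in\{0,1\}^K$ with $2\le\|\vec B\|:=\sum_i b_i\le K-1$; its digit set is $D=\{i:b_i=1\}$. With $\phi_d(x)=(x+d)/K$ for $d\in D$, let $\mu_{\vec B}$ be the unique Borel probability measure with $\mu_{\vec B}=\frac{1}{\|\vec B\|}\sum_{d\in D}\mu_{\vec B}\circ\phi_d^{-1}$, supported on the attractor $C_{\vec B}\subset[0,1]$. The CDF is $F_{\vec B}(x)=\mu_{\vec B}([0,x])$, $x\in[0,1]$. *)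

theory Defs
  imports "HOL-Probability.Probability"
begin

definition binary_digit_vector :: "nat list \<Rightarrow> bool" where
  "binary_digit_vector B \<longleftrightarrow> length B \<ge> 3 \<and> set B \<subseteq> {0, 1} \<and>
     2 \<le> sum_list B \<and> sum_list B \<le> length B - 1"

definition digit_set :: "nat list \<Rightarrow> nat set" where
  "digit_set B = {i. i < length B \<and> B ! i = 1}"

definition digit_map :: "nat \<Rightarrow> nat \<Rightarrow> real \<Rightarrow> real" where
  "digit_map K d x = (x + real d) / real K"

definition ss_measure :: "nat list \<Rightarrow> real measure" where
  "ss_measure B = (THE \<mu>. sets \<mu> = sets borel \<and> prob_space \<mu> \<and>
     (\<forall>A \<in> sets borel. measure \<mu> A =
        (\<Sum>d \<in> digit_set B. measure \<mu> (digit_map (length B) d -` A)) / real (sum_list B)))"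

definition ss_cdf :: "nat list \<Rightarrow> real \<Rightarrow> real" where
  "ss_cdf B x = measure (ss_measure B) {0..x}"

end

theory Submission
  imports Defs "HOL-Real_Asymp.Real_Asymp"
begin

text \<open>
  The distribution function F of a self-similar measure with digit set D and scale K satisfies
  the refinement equation F ((x + j) / K) = (#{d \<in> D. d < j} + [j \<in> D] F x) / |D| on [0, 1]
  for every digit j < K, together with F 0 = 0 and F 1 = 1. The measure exists (it is the law
  of a random K-ary expansion with i.i.d. uniform digits from D) and is unique, since two
  solutions of the same refinement equation agree at all K-adic rationals, hence everywhere by
  right continuity.

  Now let F and G be refinable with bases N^L and N^M. A point of level k > L + M can be
  written (y + m) / N^(L+M) with y of level k - L - M. Applying the F-equation and then the
  G-equation shows that F at this point is an affine function of G y, provided F and G agree at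
  the intermediate points of level k - L and k - M; symmetrically G at this point is an affine
  function of F y. For y = 0 and y = 1 the point lies on the grid of level L + M, so the two
  affine functions coincide. Hence agreement on the grid propagates by induction on the level to
  all N-adic rationals, and right continuity extends it to [0, 1].
\<close>

section \<open>Refinement equations\<close>

lemma affine_eq_if_eq_at_two_points:
  fixes \<alpha> \<beta> \<alpha>' \<beta>' u v t :: real
  assumes "\<alpha> + \<beta> * u = \<alpha>' + \<beta>' * u" "\<alpha> + \<beta> * v = \<alpha>' + \<beta>' * v" "u \<noteq> v"
  shows "\<alpha> + \<beta> * t = \<alpha>' + \<beta>' * t"
proof -
  have "(\<beta> - \<beta>') * (u - v) = 0"
    using assms(1,2) by (simp add: algebra_simps)
  then have "\<beta> = \<beta>'"
    using assms(3) by simp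
  then show ?thesis
    using assms(1) by simp
qed

lemma shifted_point_in_unit_interval:
  fixes y :: real and i q :: nat
  assumes "y \<in> {0..1}" "i < q"
  shows "(y + i) / q \<in> {0..1}"
proof -
  have "real i + 1 \<le> real q"
    using assms(2) by linarith
  then show ?thesis
    using assms by (auto simp: field_simps)
qed

lemma divide_mult_eq_nested:
  fixes y :: real and m p q :: nat
  assumes "q > 0"
  shows "(y + m) / (real p * real q) = ((y + real (m mod q)) / q + real (m div q)) / p"
proof -
  have "real m = real (m div q) * real q + real (m mod q)"
    by (metis div_mult_mod_eq of_nat_add of_nat_mult)
  then show ?thesis
    using assms by (simp add: field_simps)
qed

lemma eq_on_unit_interval_if_eq_on_adic:
  fixes F G :: "real \<Rightarrow> real" and b :: nat
  assumes b: "b \<ge> 2"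
    and adic: "\<And>k j. j \<le> b ^ k \<Longrightarrow> F (real j / real (b ^ k)) = G (real j / real (b ^ k))"
    and F: "\<And>x. continuous (at_right x) F" and G: "\<And>x. continuous (at_right x) G"
    and x: "x \<in> {0..1}"
  shows "F x = G x"
proof (cases "x = 1")
  case True
  then show ?thesis
    using adic[of 1 0] by simp
next
  case False
  with x have x: "0 \<le> x" "x < 1"
    by auto
  have b_pow: "real b ^ k > 0" for k
    using b by simp
  define j where "j k = nat \<lfloor>x * real b ^ k\<rfloor> + 1" for k
  define s where "s k = real (j k) / real (b ^ k)" for k
  have j: "real (j k) = of_int \<lfloor>x * real b ^ k\<rfloor> + 1" for k
    using x b_pow[of k] by (simp add: j_def)
  have "j k \<le> b ^ k" for k
  proof -
    have "0 \<le> \<lfloor>x * real b ^ k\<rfloor>" "\<lfloor>x * real b ^ k\<rfloor> < int (b ^ k)"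
      using x b_pow[of k] by (simp_all add: floor_less_iff)
    then show ?thesis
      unfolding j_def by (simp add: Suc_le_eq nat_less_iff)
  qed
  then have FG: "F (s k) = G (s k)" for k
    unfolding s_def by (rule adic)
  have s_bounds: "x < s k" "s k \<le> x + inverse (real b ^ k)" for k
    unfolding s_def j using b_pow[of k] by (simp_all add: field_simps, linarith+)
  have upper: "(\<lambda>k. x + inverse (real b ^ k)) \<longlonglongrightarrow> x"
    using tendsto_add[OF tendsto_const[of x] LIMSEQ_inverse_realpow_zero[of "real b"]] b by simp
  have "s \<longlonglongrightarrow> x"
    by (rule tendsto_sandwich[OF _ _ tendsto_const upper]) (simp_all add: s_bounds less_imp_le)
  then have "filterlim s (at_right x) sequentially"
    by (intro tendsto_imp_filterlim_at_right) (auto simp: s_bounds)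
  then have "(\<lambda>k. F (s k)) \<longlonglongrightarrow> F x" "(\<lambda>k. G (s k)) \<longlonglongrightarrow> G x"
    using F G unfolding continuous_within by (blast intro: filterlim_compose)+
  then show ?thesis
    unfolding FG using LIMSEQ_unique by blast
qed

lemma eq_on_adic_if_same_refinement:
  fixes F G :: "real \<Rightarrow> real" and K :: nat
  assumes F: "\<And>x j. x \<in> {0..1} \<Longrightarrow> j < K \<Longrightarrow> F ((x + j) / K) = a j + b j * F x"
    and G: "\<And>x j. x \<in> {0..1} \<Longrightarrow> j < K \<Longrightarrow> G ((x + j) / K) = a j + b j * G x"
    and F0: "F 0 = G 0" and F1: "F 1 = G 1"
  shows "j \<le> K ^ k \<Longrightarrow> F (real j / real (K ^ k)) = G (real j / real (K ^ k))"
proof (induction k arbitrary: j)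
  case 0
  then have "j = 0 \<or> j = 1"
    by auto
  then show ?case
    using F0 F1 by auto
next
  case (Suc k)
  show ?case
  proof (cases "j = K ^ Suc k")
    case True
    then show ?thesis
      using F0 F1 by (cases "K = 0") simp_all
  next
    case False
    with Suc.prems have "K > 0" and j: "j < K * K ^ k"
      by (auto intro: Nat.gr0I)
    then have digit: "j div K ^ k < K" and "j mod K ^ k < K ^ k"
      by (simp_all add: div_less_iff_less_mult mult.commute)
    have unit: "real (j mod K ^ k) / real (K ^ k) \<in> {0..1}"
      using shifted_point_in_unit_interval[of 0 "j mod K ^ k" "K ^ k"] \<open>j mod K ^ k < K ^ k\<close>
      by simp
    have "real j / real (K ^ Suc k) = (real (j mod K ^ k) / real (K ^ k) + real (j div K ^ k)) / real K"
      using divide_mult_eq_nested[of "K ^ k" 0 j K] \<open>K > 0\<close> by simp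
    then show ?thesis
      using F[OF unit digit] G[OF unit digit] Suc.IH[of "j mod K ^ k"] \<open>j mod K ^ k < K ^ k\<close> by simp
  qed
qed

lemma refinement_compose:
  fixes F G :: "real \<Rightarrow> real" and p q m :: nat and y :: real
  assumes F: "\<And>x j. x \<in> {0..1} \<Longrightarrow> j < p \<Longrightarrow> F ((x + j) / p) = a j + b j * F x"
    and G: "\<And>x j. x \<in> {0..1} \<Longrightarrow> j < q \<Longrightarrow> G ((x + j) / q) = c j + e j * G x"
    and m: "m < p * q" and y: "y \<in> {0..1}"
    and agree: "F ((y + real (m mod q)) / q) = G ((y + real (m mod q)) / q)"
  shows "F ((y + m) / (real p * real q)) =
    (a (m div q) + b (m div q) * c (m mod q)) + b (m div q) * e (m mod q) * G y"
proof -
  have "q > 0"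
    using m by (cases q) auto
  then have digit: "m div q < p" and "m mod q < q"
    using m by (simp_all add: div_less_iff_less_mult)
  have inner: "(y + real (m mod q)) / q \<in> {0..1}"
    by (rule shifted_point_in_unit_interval[OF y \<open>m mod q < q\<close>])
  show ?thesis
    unfolding divide_mult_eq_nested[OF \<open>q > 0\<close>] F[OF inner digit] agree G[OF y \<open>m mod q < q\<close>]
    by (simp add: algebra_simps)
qed

text \<open>Both sides are affine in G y with coefficients independent of y, so agreement at
  y = 0 and y = 1 forces agreement at y.\<close>
lemma eq_at_refined_point:
  fixes F G :: "real \<Rightarrow> real" and p q m :: nat and y :: real
  assumes F: "\<And>x j. x \<in> {0..1} \<Longrightarrow> j < p \<Longrightarrow> F ((x + j) / p) = a j + b j * F x"
    and G: "\<And>x j. x \<in> {0..1} \<Longrightarrow> j < q \<Longrightarrow> G ((x + j) / q) = c j + e j * G x"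
    and m: "m < p * q" and y: "y \<in> {0..1}" and separated: "G 0 \<noteq> G 1"
    and base: "\<And>z. z \<in> {0, 1, y} \<Longrightarrow> F z = G z"
    and fine: "\<And>z. z \<in> {0, 1, y} \<Longrightarrow>
      F ((z + real (m mod q)) / q) = G ((z + real (m mod q)) / q) \<and>
      F ((z + real (m mod p)) / p) = G ((z + real (m mod p)) / p)"
    and coarse: "\<And>z :: real. z \<in> {0, 1} \<Longrightarrow>
      F ((z + m) / (real p * real q)) = G ((z + m) / (real p * real q))"
  shows "F ((y + m) / (real p * real q)) = G ((y + m) / (real p * real q))"
proof -
  define \<alpha> where "\<alpha> = a (m div q) + b (m div q) * c (m mod q)"
  define \<beta> where "\<beta> = b (m div q) * e (m mod q)"
  define \<alpha>' where "\<alpha>' = c (m div p) + e (m div p) * a (m mod p)"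
  define \<beta>' where "\<beta>' = e (m div p) * b (m mod p)"
  have unit: "z \<in> {0..1}" if "z \<in> {0, 1, y}" for z
    using that y by auto
  have F_point: "F ((z + m) / (real p * real q)) = \<alpha> + \<beta> * G z" if "z \<in> {0, 1, y}" for z
    unfolding \<alpha>_def \<beta>_def
    by (rule refinement_compose[OF F G m unit[OF that] conjunct1[OF fine[OF that]]])
  have G_point: "G ((z + m) / (real p * real q)) = \<alpha>' + \<beta>' * G z" if "z \<in> {0, 1, y}" for z
  proof -
    have m': "m < q * p"
      using m by (simp add: mult.commute)
    have "G ((z + m) / (real q * real p)) = \<alpha>' + \<beta>' * F z"
      unfolding \<alpha>'_def \<beta>'_def
      by (rule refinement_compose[OF G F m' unit[OF that] conjunct2[OF fine[OF that], symmetric]])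
    then show ?thesis
      using base[OF that] by (simp add: mult.commute)
  qed
  have coincide: "\<alpha> + \<beta> * G z = \<alpha>' + \<beta>' * G z" if "z \<in> {0, 1}" for z
  proof -
    have z: "z \<in> {0, 1, y}"
      using that by auto
    show ?thesis
      using F_point[OF z] G_point[OF z] coarse[OF that] by linarith
  qed
  have "\<alpha> + \<beta> * G y = \<alpha>' + \<beta>' * G y"
    by (rule affine_eq_if_eq_at_two_points[OF coincide coincide separated]) simp_all
  then show ?thesis
    using F_point[of y] G_point[of y] by simp
qed

lemma eq_at_shifted_point_if_eq_at_lower_levels:
  fixes F G :: "real \<Rightarrow> real" and N r i t P :: nat
  assumes N: "N > 0"
    and lower: "\<And>i r. i < k \<Longrightarrow> r \<le> N ^ i \<Longrightarrow>
      F (real r / real (N ^ i)) = G (real r / real (N ^ i))"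
    and r: "r \<le> N ^ t" and i: "i < N ^ P" and level: "t + P < k"
  shows "F ((real r / real (N ^ t) + real i) / real (N ^ P)) =
    G ((real r / real (N ^ t) + real i) / real (N ^ P))"
proof -
  have point: "(real r / real (N ^ t) + real i) / real (N ^ P) = real (r + i * N ^ t) / real (N ^ (t + P))"
    using N by (simp add: power_add field_simps)
  have "r + i * N ^ t \<le> (i + 1) * N ^ t"
    using r by simp
  also have "\<dots> \<le> N ^ P * N ^ t"
    using i by (intro mult_le_mono1) simp
  finally have "r + i * N ^ t \<le> N ^ (t + P)"
    by (simp add: power_add mult.commute)
  then show ?thesis
    unfolding point by (rule lower[OF level])
qed

lemma eq_at_adic_point_if_eq_at_lower_levels:
  fixes F G :: "real \<Rightarrow> real" and N L M :: nat
  assumes N: "N > 0" and L: "L \<ge> 1" and M: "M \<ge> 1"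
    and F: "\<And>x j. x \<in> {0..1} \<Longrightarrow> j < N ^ L \<Longrightarrow> F ((x + j) / real (N ^ L)) = a j + b j * F x"
    and G: "\<And>x j. x \<in> {0..1} \<Longrightarrow> j < N ^ M \<Longrightarrow> G ((x + j) / real (N ^ M)) = c j + e j * G x"
    and separated: "G 0 \<noteq> G 1"
    and lower: "\<And>i r. i < k \<Longrightarrow> r \<le> N ^ i \<Longrightarrow>
      F (real r / real (N ^ i)) = G (real r / real (N ^ i))"
    and k: "L + M < k" and j: "j < N ^ k"
  shows "F (real j / real (N ^ k)) = G (real j / real (N ^ k))"
proof -
  define t where "t = k - (L + M)"
  have t: "k = t + (L + M)" "t \<ge> 1"
    using k by (simp_all add: t_def)
  define m where "m = j div N ^ t"
  define y where "y = real (j mod N ^ t) / real (N ^ t)"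
  have m_less: "m < N ^ L * N ^ M"
    using j N unfolding m_def t(1) by (simp add: div_less_iff_less_mult power_add mult_ac)
  have point: "real j / real (N ^ k) = (y + real m) / (real (N ^ L) * real (N ^ M))"
    using divide_mult_eq_nested[of "N ^ t" 0 j "N ^ L * N ^ M"] N
    unfolding y_def m_def t(1) by (simp add: power_add mult_ac)
  have y_unit: "y \<in> {0..1}"
    unfolding y_def using N by simp
  have level_t: "\<exists>r \<le> N ^ t. z = real r / real (N ^ t)" if "z \<in> {0, 1, y}" for z
  proof -
    have "0 = real 0 / real (N ^ t)" "1 = real (N ^ t) / real (N ^ t)" "j mod N ^ t \<le> N ^ t"
      using N by (simp_all add: less_imp_le)
    then show ?thesis
      using that unfolding y_def by fastforce
  qed
  show ?thesis
    unfolding point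
  proof (rule eq_at_refined_point[where F = F and G = G and p = "N ^ L" and q = "N ^ M",
        OF F G m_less y_unit separated])
    fix z assume "z \<in> {0, 1, y}"
    then obtain r where r: "r \<le> N ^ t" "z = real r / real (N ^ t)"
      using level_t by blast
    show "F z = G z"
      unfolding r(2) using t L by (intro lower r(1)) simp
    show "F ((z + real (m mod N ^ M)) / real (N ^ M)) = G ((z + real (m mod N ^ M)) / real (N ^ M)) \<and>
        F ((z + real (m mod N ^ L)) / real (N ^ L)) = G ((z + real (m mod N ^ L)) / real (N ^ L))"
      unfolding r(2) using N t L M
      by (intro conjI eq_at_shifted_point_if_eq_at_lower_levels[where F = F and G = G, OF N lower r(1)])
        auto
  next
    fix z :: real assume "z \<in> {0, 1}"
    then consider "z = 0" | "z = 1"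
      by blast
    then show "F ((z + m) / (real (N ^ L) * real (N ^ M))) = G ((z + m) / (real (N ^ L) * real (N ^ M)))"
      using lower[of "L + M" m] lower[of "L + M" "m + 1"] m_less k
      by cases (simp_all add: power_add add.commute)
  qed
qed

lemma eq_on_adic_if_eq_on_grid:
  fixes F G :: "real \<Rightarrow> real" and N L M :: nat
  assumes N: "N > 0" and L: "L \<ge> 1" and M: "M \<ge> 1"
    and F: "\<And>x j. x \<in> {0..1} \<Longrightarrow> j < N ^ L \<Longrightarrow> F ((x + j) / real (N ^ L)) = a j + b j * F x"
    and G: "\<And>x j. x \<in> {0..1} \<Longrightarrow> j < N ^ M \<Longrightarrow> G ((x + j) / real (N ^ M)) = c j + e j * G x"
    and separated: "G 0 \<noteq> G 1"
    and grid: "\<And>m. m \<le> N ^ (L + M) \<Longrightarrow>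
      F (real m / real (N ^ (L + M))) = G (real m / real (N ^ (L + M)))"
  shows "j \<le> N ^ k \<Longrightarrow> F (real j / real (N ^ k)) = G (real j / real (N ^ k))"
proof (induction k arbitrary: j rule: less_induct)
  case (less k)
  consider "k \<le> L + M" | "L + M < k" "j = N ^ k" | "L + M < k" "j < N ^ k"
    using less.prems by linarith
  then show ?case
  proof cases
    case 1
    have scale: "real j / real (N ^ k) = real (j * N ^ (L + M - k)) / real (N ^ (L + M))"
      using 1 N by (simp add: field_simps flip: power_add)
    have "j * N ^ (L + M - k) \<le> N ^ (L + M)"
      using less.prems 1 by (metis le_add_diff_inverse mult_le_mono1 power_add)
    then show ?thesis
      unfolding scale by (rule grid)
  next
    case 2
    then show ?thesis
      using less.IH[of 0 1] N by simp
  next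
    case 3
    show ?thesis
      by (rule eq_at_adic_point_if_eq_at_lower_levels[OF N L M F G separated less.IH 3])
  qed
qed

section \<open>Existence of self-similar measures\<close>

lemma digit_set_subset: "digit_set B \<subseteq> {..<length B}"
  unfolding digit_set_def by auto

lemma finite_digit_set [simp]: "finite (digit_set B)"
  using finite_subset[OF digit_set_subset] by blast

lemma card_digit_set:
  assumes "set B \<subseteq> {0, 1}"
  shows "card (digit_set B) = sum_list B"
proof -
  have "sum_list B = (\<Sum>i<length B. B ! i)"
    by (simp add: sum_list_sum_nth atLeast0LessThan)
  also have "\<dots> = (\<Sum>i<length B. of_bool (B ! i = 1))"
    using assms nth_mem by (intro sum.cong) fastforce+
  also have "\<dots> = card (digit_set B)"
    by (simp add: digit_set_def Int_def conj_commute)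
  finally show ?thesis by simp
qed

lemma binary_digit_vectorD:
  assumes "binary_digit_vector B"
  shows "length B \<ge> 3" "card (digit_set B) = sum_list B" "sum_list B \<ge> 2"
    "sum_list B < length B"
  using assms card_digit_set unfolding binary_digit_vector_def by auto

definition self_similar :: "nat list \<Rightarrow> real measure \<Rightarrow> bool" where
  "self_similar B \<mu> \<longleftrightarrow> sets \<mu> = sets borel \<and> prob_space \<mu> \<and>
     (\<forall>A \<in> sets borel. measure \<mu> A =
        (\<Sum>d \<in> digit_set B. measure \<mu> (digit_map (length B) d -` A)) / real (sum_list B))"

lemma ss_measure_eq_The: "ss_measure B = (THE \<mu>. self_similar B \<mu>)"
  unfolding ss_measure_def self_similar_def ..

lemma digit_map_measurable [measurable]: "digit_map K d \<in> borel_measurable borel"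
  unfolding digit_map_def by measurable

text \<open>Truncating the digits at K makes the series converge for every stream; on streams
  of digits below K the truncation has no effect.\<close>
definition radix_value :: "nat \<Rightarrow> nat stream \<Rightarrow> real" where
  "radix_value K w = (\<Sum>i. real (min (w !! i) K) / real K ^ Suc i)"

lemma summable_radix_value:
  assumes "K \<ge> 2"
  shows "summable (\<lambda>i. real (min (w !! i) K) / real K ^ Suc i)"
proof (rule summable_comparison_test)
  show "summable (\<lambda>i. real K * (1 / real K) ^ Suc i)"
    using assms by (intro summable_mult summable_geometric_iff[THEN iffD2] summable_Suc_iff[THEN iffD2]) auto
  have "real (min (w !! i) K) / real K ^ Suc i \<le> real K / real K ^ Suc i" for i
    using assms by (intro divide_right_mono) auto
  then show "\<exists>N. \<forall>n\<ge>N. norm (real (min (w !! n) K) / real K ^ Suc n) \<le> real K * (1 / real K) ^ Suc n"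
    by (simp add: power_divide)
qed

lemma radix_value_Stream:
  assumes "K \<ge> 2" "d < K"
  shows "radix_value K (d ## w) = digit_map K d (radix_value K w)"
proof -
  let ?f = "\<lambda>w i. real (min (w !! i) K) / real K ^ Suc i"
  have "radix_value K w / real K = (\<Sum>i. ?f w i / real K)"
    unfolding radix_value_def by (rule suminf_divide[OF summable_radix_value[OF assms(1)], symmetric])
  also have "\<dots> = (\<Sum>i. ?f (d ## w) (Suc i))"
    by (simp add: field_simps)
  also have "\<dots> = radix_value K (d ## w) - ?f (d ## w) 0"
    unfolding radix_value_def by (rule suminf_split_head[OF summable_radix_value[OF assms(1)]])
  finally show ?thesis
    using assms by (simp add: digit_map_def field_simps)
qed

lemma radix_value_measurable [measurable]:
  "radix_value K \<in> borel_measurable (stream_space (measure_pmf p))"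
  unfolding radix_value_def by measurable

lemma emeasure_distr_radix_value:
  assumes D: "finite D" "D \<noteq> {}" "D \<subseteq> {..<K}" and K: "K \<ge> 2" and A: "A \<in> sets borel"
  defines "\<mu> \<equiv> distr (stream_space (measure_pmf (pmf_of_set D))) borel (radix_value K)"
  shows "emeasure \<mu> A = (\<Sum>d\<in>D. emeasure \<mu> (digit_map K d -` A)) / card D"
proof -
  define S where "S = stream_space (measure_pmf (pmf_of_set D))"
  note A[measurable]
  have emeasure_\<mu>: "emeasure \<mu> A' = emeasure S {w \<in> space S. radix_value K w \<in> A'}"
    if "A' \<in> sets borel" for A'
    using that by (simp add: \<mu>_def S_def emeasure_distr vimage_def Int_def conj_commute)
  have "emeasure \<mu> A = (\<integral>\<^sup>+d. emeasure S {w \<in> space S. radix_value K (d ## w) \<in> A} \<partial>pmf_of_set D)"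
    unfolding emeasure_\<mu>[OF A] S_def
    by (subst prob_space.emeasure_stream_space[OF prob_space_measure_pmf])
      (measurable, simp add: space_stream_space)
  also have "\<dots> = (\<Sum>d\<in>D. emeasure S {w \<in> space S. radix_value K (d ## w) \<in> A}) / card D"
    using D by (simp add: nn_integral_pmf_of_set)
  also have "(\<Sum>d\<in>D. emeasure S {w \<in> space S. radix_value K (d ## w) \<in> A}) =
      (\<Sum>d\<in>D. emeasure \<mu> (digit_map K d -` A))"
  proof (intro sum.cong refl)
    fix d assume "d \<in> D"
    then have "radix_value K (d ## w) = digit_map K d (radix_value K w)" for w
      using D K by (auto intro: radix_value_Stream)
    then show "emeasure S {w \<in> space S. radix_value K (d ## w) \<in> A} = emeasure \<mu> (digit_map K d -` A)"
      by (simp add: emeasure_\<mu> measurable_sets_borel[OF digit_map_measurable A])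
  qed
  finally show ?thesis .
qed

lemma self_similar_distr_radix_value:
  assumes B: "binary_digit_vector B"
  shows "self_similar B
    (distr (stream_space (measure_pmf (pmf_of_set (digit_set B)))) borel (radix_value (length B)))"
    (is "self_similar B ?\<mu>")
proof -
  have D: "finite (digit_set B)" "digit_set B \<noteq> {}" "digit_set B \<subseteq> {..<length B}"
    using binary_digit_vectorD(3)[OF B, folded binary_digit_vectorD(2)[OF B]] digit_set_subset
    by auto
  have K: "length B \<ge> 2" and n: "real (card (digit_set B)) = real (sum_list B)" "sum_list B > 0"
    using binary_digit_vectorD[OF B] by auto
  interpret prob_space ?\<mu>
    by (intro prob_space.prob_space_distr prob_space.prob_space_stream_space prob_space_measure_pmf)
      measurable
  have "measure ?\<mu> A = (\<Sum>d\<in>digit_set B. measure ?\<mu> (digit_map (length B) d -` A)) / sum_list B"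
    if A: "A \<in> sets borel" for A
  proof -
    have "ennreal (measure ?\<mu> A) =
        ennreal ((\<Sum>d\<in>digit_set B. measure ?\<mu> (digit_map (length B) d -` A)) / sum_list B)"
      using emeasure_distr_radix_value[OF D K A] n
      by (simp add: emeasure_eq_measure divide_ennreal sum_nonneg ennreal_of_nat_eq_real_of_nat)
    then show ?thesis
      by (subst (asm) ennreal_inj) (simp_all add: sum_nonneg)
  qed
  then show ?thesis
    unfolding self_similar_def by (simp add: prob_space_axioms)
qed

section \<open>The distribution function of a self-similar measure\<close>

lemma filterlim_power_mult_at_bot:
  fixes c x :: real
  assumes "c > 1" "x < 0"
  shows "filterlim (\<lambda>j. c ^ j * x) at_bot sequentially"
  using assms by real_asymp

lemma filterlim_power_mult_add_at_top:
  fixes c x a :: real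
  assumes "c > 1" "x > 0"
  shows "filterlim (\<lambda>j. c ^ j * x + a) at_top sequentially"
  using assms by real_asymp

lemma nonneg_le_divide_imp_0:
  fixes c a :: real
  assumes "c \<le> c / a" "0 \<le> c" "1 < a"
  shows "c = 0"
proof (rule ccontr)
  assume "c \<noteq> 0"
  with assms have "c * 1 < c * a"
    by (intro mult_strict_left_mono) auto
  moreover have "c * a \<le> c"
    using assms by (simp add: le_divide_eq)
  ultimately show False
    by simp
qed

locale self_similar_distribution =
  fixes B :: "nat list" and \<mu> :: "real measure"
  assumes binary: "binary_digit_vector B" and self_similar: "self_similar B \<mu>"
begin

abbreviation "K \<equiv> real (length B)"
abbreviation "D \<equiv> digit_set B"
abbreviation "n \<equiv> real (card D)"

sublocale real_distribution \<mu>
  using self_similar unfolding self_similar_def real_distribution_def real_distribution_axioms_def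
  by auto

lemma K_ge_3: "K \<ge> 3" and n_ge_2: "n \<ge> 2"
  using binary_digit_vectorD[OF binary] by auto

lemma B_nonempty [simp]: "B \<noteq> []"
  using K_ge_3 by auto

lemma D_nonempty [simp]: "D \<noteq> {}"
  using n_ge_2 by auto

lemma digit_less_length: "d \<in> D \<Longrightarrow> d < length B"
  using digit_set_subset[of B] by blast

lemma measure_self_similar:
  "A \<in> sets borel \<Longrightarrow> measure \<mu> A = (\<Sum>d\<in>D. measure \<mu> (digit_map (length B) d -` A)) / n"
  using self_similar unfolding self_similar_def binary_digit_vectorD(2)[OF binary, symmetric]
  by blast

lemma cdf_self_similar: "cdf \<mu> y = (\<Sum>d\<in>D. cdf \<mu> (K * y - d)) / n"
proof -
  have "digit_map (length B) d -` {..y} = {..K * y - d}" for d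
    by (auto simp: digit_map_def pos_divide_le_eq algebra_simps)
  then show ?thesis
    using measure_self_similar[of "{..y}"] by (simp add: cdf_def)
qed

lemma cdf_le_cdf_scaled: "cdf \<mu> y \<le> cdf \<mu> (K * y)"
proof -
  have "(\<Sum>d\<in>D. cdf \<mu> (K * y - d)) \<le> (\<Sum>d\<in>D. cdf \<mu> (K * y))"
    by (intro sum_mono cdf_nondecreasing) auto
  then show ?thesis
    using n_ge_2 by (subst cdf_self_similar) (simp add: divide_le_eq mult.commute)
qed

lemma cdf_ge_cdf_scaled: "cdf \<mu> (K * (y - 1) + 1) \<le> cdf \<mu> y"
proof -
  have "(\<Sum>d\<in>D. cdf \<mu> (K * (y - 1) + 1)) \<le> (\<Sum>d\<in>D. cdf \<mu> (K * y - d))"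
  proof (intro sum_mono cdf_nondecreasing)
    fix d assume "d \<in> D"
    then have "real d + 1 \<le> K"
      using digit_less_length[of d] by linarith
    then show "K * (y - 1) + 1 \<le> K * y - d"
      by (simp add: algebra_simps)
  qed
  then show ?thesis
    using n_ge_2 by (subst (2) cdf_self_similar) (simp add: le_divide_eq mult.commute)
qed

lemma cdf_neg:
  assumes "x < 0"
  shows "cdf \<mu> x = 0"
proof -
  have "cdf \<mu> x \<le> cdf \<mu> (K ^ j * x)" for j
    by (induction j) (auto intro: order_trans cdf_le_cdf_scaled simp: mult.assoc)
  moreover have "filterlim (\<lambda>j. K ^ j * x) at_bot sequentially"
    using K_ge_3 assms by (intro filterlim_power_mult_at_bot) auto
  then have "(\<lambda>j. cdf \<mu> (K ^ j * x)) \<longlonglongrightarrow> 0"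
    by (rule filterlim_compose[OF cdf_lim_at_bot])
  ultimately have "cdf \<mu> x \<le> 0"
    by (intro LIMSEQ_le_const) auto
  then show ?thesis
    using cdf_nonneg[of x] by linarith
qed

lemma cdf_gt_1:
  assumes "x > 1"
  shows "cdf \<mu> x = 1"
proof -
  have "cdf \<mu> (K ^ j * (x - 1) + 1) \<le> cdf \<mu> x" for j
  proof (induction j)
    case (Suc j)
    then show ?case
      using cdf_ge_cdf_scaled[of "K ^ j * (x - 1) + 1"] by (simp add: mult.assoc)
  qed simp
  moreover have "filterlim (\<lambda>j. K ^ j * (x - 1) + 1) at_top sequentially"
    using K_ge_3 assms by (intro filterlim_power_mult_add_at_top) auto
  then have "(\<lambda>j. cdf \<mu> (K ^ j * (x - 1) + 1)) \<longlonglongrightarrow> 1"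
    by (rule filterlim_compose[OF cdf_lim_at_top_prob])
  ultimately have "1 \<le> cdf \<mu> x"
    by (intro LIMSEQ_le_const2) auto
  then show ?thesis
    using cdf_bounded_prob[of x] by linarith
qed

lemma cdf_0: "cdf \<mu> 0 = 0"
proof -
  have "cdf \<mu> 0 = (\<Sum>d\<in>D. cdf \<mu> (K * 0 - d)) / n"
    by (rule cdf_self_similar)
  also have "(\<Sum>d\<in>D. cdf \<mu> (K * 0 - d)) = (\<Sum>d\<in>D. if d = 0 then cdf \<mu> 0 else 0)"
    by (intro sum.cong) (auto intro: cdf_neg)
  also have "\<dots> \<le> cdf \<mu> 0"
    using cdf_nonneg[of 0] by simp
  finally have "cdf \<mu> 0 \<le> cdf \<mu> 0 / n"
    by (simp add: divide_right_mono)
  then show ?thesis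
    by (rule nonneg_le_divide_imp_0) (use n_ge_2 cdf_nonneg[of 0] in linarith)+
qed

lemma cdf_1: "cdf \<mu> 1 = 1"
proof -
  let ?last = "length B - 1"
  have "cdf \<mu> 1 = (\<Sum>d\<in>D. cdf \<mu> (K * 1 - d)) / n"
    by (rule cdf_self_similar)
  also have "(\<Sum>d\<in>D. cdf \<mu> (K * 1 - d)) = (\<Sum>d\<in>D. 1 - (if d = ?last then 1 - cdf \<mu> 1 else 0))"
  proof (intro sum.cong refl)
    fix d assume "d \<in> D"
    then have "d < length B"
      by (rule digit_less_length)
    then have "real d + 1 \<le> K" "d \<noteq> ?last \<Longrightarrow> real d + 2 \<le> K"
      by linarith+
    then show "cdf \<mu> (K * 1 - d) = 1 - (if d = ?last then 1 - cdf \<mu> 1 else 0)"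
      by (auto intro!: cdf_gt_1)
  qed
  finally have "1 - cdf \<mu> 1 = (if ?last \<in> D then 1 - cdf \<mu> 1 else 0) / n"
    using n_ge_2 by (simp add: sum_subtractf diff_divide_distrib)
  then have "1 - cdf \<mu> 1 \<le> (1 - cdf \<mu> 1) / n"
    using cdf_bounded_prob[of 1] by (auto split: if_splits)
  then have "1 - cdf \<mu> 1 = 0"
    by (rule nonneg_le_divide_imp_0) (use n_ge_2 cdf_bounded_prob[of 1] in linarith)+
  then show ?thesis
    by simp
qed

lemma cdf_eq_0: "x \<le> 0 \<Longrightarrow> cdf \<mu> x = 0"
  using cdf_neg cdf_0 by (cases "x = 0") auto

lemma cdf_eq_1: "1 \<le> x \<Longrightarrow> cdf \<mu> x = 1"
  using cdf_gt_1 cdf_1 by (cases "x = 1") auto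

lemma cdf_digit_shift:
  assumes x: "x \<in> {0..1}" and j: "j < length B"
  shows "cdf \<mu> ((x + j) / K) = card {d \<in> D. d < j} / n + of_bool (j \<in> D) / n * cdf \<mu> x"
proof -
  have "cdf \<mu> (x + j - d) = of_bool (d < j) + (if d = j then cdf \<mu> x else 0)" for d :: nat
  proof -
    consider "d < j" | "d = j" | "d > j"
      by linarith
    then show ?thesis
    proof cases
      case 1
      then have "real d + 1 \<le> real j"
        by linarith
      then show ?thesis
        using 1 x by (simp add: cdf_eq_1)
    next
      case 3
      then have "real j + 1 \<le> real d"
        by linarith
      then show ?thesis
        using 3 x by (simp add: cdf_eq_0)
    qed simp
  qed
  moreover have "K * ((x + j) / K) = x + j"
    by simp
  ultimately have "(\<Sum>d\<in>D. cdf \<mu> (K * ((x + j) / K) - d)) = card {d \<in> D. d < j} + of_bool (j \<in> D) * cdf \<mu> x"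
    by (simp add: sum.distrib Int_def conj_commute)
  with cdf_self_similar[of "(x + j) / K"] show ?thesis
    by (simp only: add_divide_distrib times_divide_eq_left)
qed

lemma measure_atLeastAtMost_0: "measure \<mu> {0..x} = cdf \<mu> x"
proof (cases "x < 0")
  case False
  have "(cdf \<mu> \<longlongrightarrow> 0) (at_left 0)"
    by (rule tendsto_eventually, rule eventually_mono[OF eventually_at_left_real[of "-1" 0]])
      (auto intro: cdf_eq_0)
  then have "measure \<mu> {..<0} = 0"
    by (intro tendsto_unique[OF _ cdf_at_left]) auto
  moreover have "{..x} = {..<0} \<union> {0..x}"
    using False by auto
  then have "cdf \<mu> x = measure \<mu> {..<0} + measure \<mu> {0..x}"
    unfolding cdf_def by (simp add: finite_measure_Union ivl_disj_int_one(4))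
  ultimately show ?thesis
    by simp
qed (simp add: cdf_eq_0)

end

section \<open>Uniqueness and comparison of distribution functions\<close>

lemma self_similar_unique:
  assumes B: "binary_digit_vector B" and "self_similar B \<mu>" and "self_similar B \<nu>"
  shows "\<mu> = \<nu>"
proof -
  interpret \<mu>: self_similar_distribution B \<mu>
    using assms by unfold_locales
  interpret \<nu>: self_similar_distribution B \<nu>
    using assms by unfold_locales
  have adic: "cdf \<mu> (real j / real (length B ^ k)) = cdf \<nu> (real j / real (length B ^ k))"
    if "j \<le> length B ^ k" for j k
    by (rule eq_on_adic_if_same_refinement[where F = "cdf \<mu>" and G = "cdf \<nu>" and K = "length B",
          OF \<mu>.cdf_digit_shift \<nu>.cdf_digit_shift])
      (simp_all add: \<mu>.cdf_0 \<mu>.cdf_1 \<nu>.cdf_0 \<nu>.cdf_1 that)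
  have "length B \<ge> 2"
    using \<mu>.K_ge_3 by linarith
  have "cdf \<mu> x = cdf \<nu> x" for x
  proof -
    consider "x \<le> 0" | "x \<ge> 1" | "x \<in> {0..1}"
      by fastforce
    then show ?thesis
    proof cases
      case 3
      show ?thesis
        by (rule eq_on_unit_interval_if_eq_on_adic[OF \<open>length B \<ge> 2\<close> adic
              \<mu>.cdf_is_right_cont \<nu>.cdf_is_right_cont 3])
    qed (simp_all add: \<mu>.cdf_eq_0 \<nu>.cdf_eq_0 \<mu>.cdf_eq_1 \<nu>.cdf_eq_1)
  qed
  then show ?thesis
    using cdf_unique[OF \<mu>.real_distribution_axioms \<nu>.real_distribution_axioms] by blast
qed

lemma ss_measure_self_similar:
  assumes "binary_digit_vector B"
  shows "self_similar B (ss_measure B)"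
  unfolding ss_measure_eq_The
  by (rule theI') (use assms self_similar_distr_radix_value self_similar_unique in blast)

lemma self_similar_distribution_ss_measure:
  "binary_digit_vector B \<Longrightarrow> self_similar_distribution B (ss_measure B)"
  by unfold_locales (auto intro: ss_measure_self_similar)

lemma ss_cdf_eq_cdf:
  assumes "binary_digit_vector B"
  shows "ss_cdf B = cdf (ss_measure B)"
proof -
  interpret self_similar_distribution B "ss_measure B"
    using assms by (rule self_similar_distribution_ss_measure)
  show ?thesis
    unfolding ss_cdf_def by (simp add: measure_atLeastAtMost_0)
qed

lemma binary_digit_vector_length_power:
  assumes "binary_digit_vector B" and "length B = N ^ L"
  shows "N \<ge> 2" and "L \<ge> 1"
proof -
  have "3 \<le> N ^ L"
    using binary_digit_vectorD(1)[OF assms(1)] assms(2) by simp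
  moreover have "N ^ L \<le> 1" if "N \<le> 1 \<or> L = 0"
    using that by (auto simp: power_le_one le_Suc_eq)
  ultimately show "N \<ge> 2" "L \<ge> 1"
    by fastforce+
qed

lemma cdf_eq_on_unit_interval_if_eq_on_grid:
  assumes "self_similar_distribution BL \<mu>" and "self_similar_distribution BM \<nu>"
    and len: "length BL = N ^ L" "length BM = N ^ M"
    and on_grid: "\<And>m. 1 \<le> m \<Longrightarrow> m \<le> N ^ (L + M) - 1 \<Longrightarrow>
      cdf \<mu> (real m / real (N ^ (L + M))) = cdf \<nu> (real m / real (N ^ (L + M)))"
    and x: "x \<in> {0..1}"
  shows "cdf \<mu> x = cdf \<nu> x"
proof -
  interpret \<mu>: self_similar_distribution BL \<mu>
    by fact
  interpret \<nu>: self_similar_distribution BM \<nu>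
    by fact
  note N = binary_digit_vector_length_power[OF \<mu>.binary len(1)]
    binary_digit_vector_length_power(2)[OF \<nu>.binary len(2)]
  have grid: "cdf \<mu> (real m / real (N ^ (L + M))) = cdf \<nu> (real m / real (N ^ (L + M)))"
    if m: "m \<le> N ^ (L + M)" for m
  proof -
    consider "m = 0" | "m = N ^ (L + M)" | "1 \<le> m" "m \<le> N ^ (L + M) - 1"
      using m by linarith
    then show ?thesis
    proof cases
      case 1
      then show ?thesis
        by (simp add: \<mu>.cdf_0 \<nu>.cdf_0)
    next
      case 2
      then show ?thesis
        using N(1) by (simp add: \<mu>.cdf_1 \<nu>.cdf_1)
    next
      case 3
      then show ?thesis
        by (rule on_grid)
    qed
  qed
  have separated: "cdf \<nu> 0 \<noteq> cdf \<nu> 1"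
    by (simp add: \<nu>.cdf_0 \<nu>.cdf_1)
  have adic: "cdf \<mu> (real j / real (N ^ k)) = cdf \<nu> (real j / real (N ^ k))" if "j \<le> N ^ k" for j k
    using N(1) by (intro eq_on_adic_if_eq_on_grid[OF _ N(2,3) \<mu>.cdf_digit_shift[unfolded len(1)]
        \<nu>.cdf_digit_shift[unfolded len(2)] separated grid that]) simp
  show ?thesis
    by (rule eq_on_unit_interval_if_eq_on_adic[OF N(1) adic \<mu>.cdf_is_right_cont \<nu>.cdf_is_right_cont x])
qed

theorem proposition2p6:
  fixes L M N :: nat and BL BM :: "nat list"
  assumes "binary_digit_vector BL" and "length BL = N ^ L"
      and "binary_digit_vector BM" and "length BM = N ^ M"
  shows "(\<forall>x \<in> {real m / real (N ^ (L + M)) | m. 1 \<le> m \<and> m \<le> N ^ (L + M) - 1}.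
            ss_cdf BL x = ss_cdf BM x)
         \<longleftrightarrow> (\<forall>x \<in> {0..1}. ss_cdf BL x = ss_cdf BM x)"
proof -
  let ?grid = "{real m / real (N ^ (L + M)) | m. 1 \<le> m \<and> m \<le> N ^ (L + M) - 1}"
  let ?F = "cdf (ss_measure BL)" and ?G = "cdf (ss_measure BM)"
  have "?grid \<subseteq> {0..1}"
    using shifted_point_in_unit_interval[of 0 _ "N ^ (L + M)"] by force
  moreover have "?F x = ?G x" if on_grid: "\<forall>x \<in> ?grid. ?F x = ?G x" and x: "x \<in> {0..1}" for x
  proof (rule cdf_eq_on_unit_interval_if_eq_on_grid[OF self_similar_distribution_ss_measure[OF assms(1)]
        self_similar_distribution_ss_measure[OF assms(3)] assms(2,4) _ x])
    fix m assume "1 \<le> m" "m \<le> N ^ (L + M) - 1"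
    then show "?F (real m / real (N ^ (L + M))) = ?G (real m / real (N ^ (L + M)))"
      using on_grid by blast
  qed
  ultimately show ?thesis
    unfolding ss_cdf_eq_cdf[OF assms(1)] ss_cdf_eq_cdf[OF assms(3)] by blast
qed

end
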